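(* Let $D$ be an integral domain and let $\Theta$ be a Jaffard family of $D$. Then there is an exact sequence $$0\longrightarrow\mathrm{Pic}(D,\Theta)\longrightarrow\mathrm{Pic}(D)\longrightarrow\bigoplus_{T\in\Theta}\mathrm{Pic}(T)\longrightarrow 0,$$ where the first map is the inclusion and the second is $[I]\mapsto([IT])_{T\in\Theta}$.
   Context: $K$ is the quotient field of $D$; for a domain $A$, $\mathrm{Pic}(A)$ is the group of invertible fractional ideals modulo principal ones. $\mathrm{Pic}(D,\Theta)=\{[I]\in\mathrm{Pic}(D)\mid IT\text{ principal for all }T\in\Theta\}$. An overring is a ring between $D$ and $K$, flat if flat as a $D$-module. A pre-Jaffard family of $D$ is a set $\Theta$ of overrings with: $\Theta=\{K\}$ or $K\notin\Theta$; all members flat; complete (every ideal $I$ of $D$ equals $\bigcap_{T\in\Theta}IT$); independent ($TT'=K$ for distinct members); compact in the Zariski topology on overrings (subbasic opens $\{T\mid x_1,\dots,x_n\in T\}$). A Jaffard family is a pre-Jaffard family that is locally finite (each nonzero $x\in D$ is a nonunit in only finitely many members). *)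

theory Defs
  imports "HOL-Algebra.Product_Groups" "HOL-Algebra.Coset" "HOL-Analysis.Abstract_Topology"
begin

text \<open>Ambient field K is a type 'k :: field; D is a subring of K whose quotient field is K.\<close>

definition is_subring :: "'k::field set \<Rightarrow> bool" where
  "is_subring R \<longleftrightarrow> 0 \<in> R \<and> 1 \<in> R \<and> (\<forall>x\<in>R. \<forall>y\<in>R. x + y \<in> R \<and> x - y \<in> R \<and> x * y \<in> R)"

definition domain_with_qf :: "'k::field set \<Rightarrow> bool" where
  "domain_with_qf D \<longleftrightarrow> is_subring D \<and> (\<forall>z. \<exists>a\<in>D. \<exists>b\<in>D. b \<noteq> 0 \<and> z = a / b)"

definition ideal_prod :: "'k::field set \<Rightarrow> 'k set \<Rightarrow> 'k set" where
  "ideal_prod A B = {(\<Sum>i<(n::nat). f i * g i) | n f g. \<forall>i<n. f i \<in> A \<and> g i \<in> B}"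

definition submodule :: "'k::field set \<Rightarrow> 'k set \<Rightarrow> bool" where
  "submodule R M \<longleftrightarrow> 0 \<in> M \<and> (\<forall>x\<in>M. \<forall>y\<in>M. x + y \<in> M) \<and> (\<forall>r\<in>R. \<forall>x\<in>M. r * x \<in> M)"

definition ring_ideal :: "'k::field set \<Rightarrow> 'k set \<Rightarrow> bool" where
  "ring_ideal R I \<longleftrightarrow> submodule R I \<and> I \<subseteq> R"

definition frac_ideal :: "'k::field set \<Rightarrow> 'k set \<Rightarrow> bool" where
  "frac_ideal R I \<longleftrightarrow> submodule R I \<and> (\<exists>d\<in>R. d \<noteq> 0 \<and> (\<lambda>x. d * x) ` I \<subseteq> R)"

definition invertible_frac :: "'k::field set \<Rightarrow> 'k set \<Rightarrow> bool" where
  "invertible_frac R I \<longleftrightarrow> frac_ideal R I \<and> (\<exists>J. frac_ideal R J \<and> ideal_prod I J = R)"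

definition principal :: "'k::field set \<Rightarrow> 'k set \<Rightarrow> bool" where
  "principal R I \<longleftrightarrow> (\<exists>x. I = (\<lambda>r. x * r) ` R)"

definition ideal_group :: "'k::field set \<Rightarrow> 'k set monoid" where
  "ideal_group R = \<lparr>carrier = {I. invertible_frac R I}, mult = ideal_prod, one = R\<rparr>"

definition princ :: "'k::field set \<Rightarrow> 'k set set" where
  "princ R = {I. invertible_frac R I \<and> principal R I}"

definition Pic :: "'k::field set \<Rightarrow> 'k set set monoid" where
  "Pic R = ideal_group R Mod princ R"

definition pic_class :: "'k::field set \<Rightarrow> 'k set \<Rightarrow> 'k set set" where
  "pic_class R I = princ R #>\<^bsub>ideal_group R\<^esub> I"

definition overring :: "'k::field set \<Rightarrow> 'k set \<Rightarrow> bool" where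
  "overring D T \<longleftrightarrow> is_subring T \<and> D \<subseteq> T"

text \<open>Flatness of T as a D-module, via the equational criterion of flatness.\<close>
definition flat_over :: "'k::field set \<Rightarrow> 'k set \<Rightarrow> bool" where
  "flat_over D T \<longleftrightarrow>
     (\<forall>n a x. (\<forall>i<n. a i \<in> D \<and> x i \<in> T) \<and> (\<Sum>i<(n::nat). a i * x i) = 0 \<longrightarrow>
        (\<exists>(m::nat) b y. (\<forall>j<m. y j \<in> T) \<and> (\<forall>i<n. \<forall>j<m. b i j \<in> D) \<and>
             (\<forall>i<n. x i = (\<Sum>j<m. b i j * y j)) \<and> (\<forall>j<m. (\<Sum>i<n. a i * b i j) = 0)))"

definition zariski :: "'k::field set \<Rightarrow> 'k set topology" where
  "zariski D = topology_generated_by {{T. overring D T \<and> set xs \<subseteq> T} | xs. True}"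

definition pre_jaffard :: "'k::field set \<Rightarrow> 'k set set \<Rightarrow> bool" where
  "pre_jaffard D \<Theta> \<longleftrightarrow>
     (\<Theta> = {UNIV} \<or> UNIV \<notin> \<Theta>) \<and>
     (\<forall>T\<in>\<Theta>. overring D T \<and> flat_over D T) \<and>
     (\<forall>I. ring_ideal D I \<longrightarrow> I = (\<Inter>T\<in>\<Theta>. ideal_prod I T)) \<and>
     (\<forall>T\<in>\<Theta>. \<forall>T'\<in>\<Theta>. T \<noteq> T' \<longrightarrow> ideal_prod T T' = UNIV) \<and>
     compactin (zariski D) \<Theta>"

definition jaffard :: "'k::field set \<Rightarrow> 'k set set \<Rightarrow> bool" where
  "jaffard D \<Theta> \<longleftrightarrow> pre_jaffard D \<Theta> \<and>
     (\<forall>x\<in>D. x \<noteq> 0 \<longrightarrow> finite {T\<in>\<Theta>. \<not> (\<exists>y\<in>T. x * y = 1)})"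

definition Pic_rel :: "'k::field set \<Rightarrow> 'k set set \<Rightarrow> 'k set set set" where
  "Pic_rel D \<Theta> = {c \<in> carrier (Pic D). \<exists>I\<in>c. \<forall>T\<in>\<Theta>. principal T (ideal_prod I T)}"

definition pic_map :: "'k::field set \<Rightarrow> 'k set set \<Rightarrow> 'k set set \<Rightarrow> ('k set \<Rightarrow> 'k set set)" where
  "pic_map D \<Theta> c = (\<lambda>T\<in>\<Theta>. pic_class T (ideal_prod (SOME I. I \<in> c) T))"

end

theory Submission
  imports Defs
begin

text \<open>
  Extension \<open>I \<mapsto> IT\<close> is multiplicative and sends principal ideals to principal ones, so
  \<open>[I] \<mapsto> ([IT])\<^sub>T\<close> is a homomorphism; if \<open>dI \<subseteq> D\<close> and \<open>0 \<noteq> i \<in> I\<close>, then \<open>IT = d\<^sup>-\<^sup>1T\<close> for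
  every \<open>T\<close> in which \<open>di\<close> is a unit, so by local finiteness the image lies in the direct sum. For surjectivity it suffices to hit a class
  supported at a single \<open>T\<^sub>0\<close>, represented by an integral invertible ideal \<open>J\<close> of \<open>T\<^sub>0\<close>.
  Its contraction \<open>I = J \<inter> D\<close> satisfies \<open>IT\<^sub>0 = J\<close> by flatness and \<open>IT = T\<close> for \<open>T \<noteq> T\<^sub>0\<close> by
  independence; moreover \<open>I (D : I)\<close> is an ideal of \<open>D\<close> that becomes the unit ideal in every
  \<open>T\<close>, hence equals \<open>D\<close> by completeness, so \<open>I\<close> is invertible.
\<close>

section \<open>Products of additive subgroups of a field\<close>

lemma mult_mem_ideal_prod [intro]: "a \<in> A \<Longrightarrow> b \<in> B \<Longrightarrow> a * b \<in> ideal_prod A B"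
  unfolding ideal_prod_def by (rule CollectI, rule exI[of _ 1]) auto

lemma zero_mem_ideal_prod [intro]: "0 \<in> ideal_prod A B"
  unfolding ideal_prod_def by (rule CollectI, rule exI[of _ 0]) auto

lemma add_mem_ideal_prod [intro]:
  assumes "x \<in> ideal_prod A B" and "y \<in> ideal_prod A B"
  shows "x + y \<in> ideal_prod A B"
proof -
  obtain n :: nat and f g where x: "x = (\<Sum>i<n. f i * g i)" "\<forall>i<n. f i \<in> A \<and> g i \<in> B"
    using assms(1) unfolding ideal_prod_def by blast
  obtain m :: nat and f' g' where y: "y = (\<Sum>i<m. f' i * g' i)" "\<forall>i<m. f' i \<in> A \<and> g' i \<in> B"
    using assms(2) unfolding ideal_prod_def by blast
  define F where "F i = (if i < n then f i else f' (i - n))" for i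
  define G where "G i = (if i < n then g i else g' (i - n))" for i
  have "(\<Sum>i<n + m. F i * G i) = (\<Sum>i<n. F i * G i) + (\<Sum>i<m. F (i + n) * G (i + n))"
    by (induction m) (auto simp: add_ac)
  also have "\<dots> = x + y"
    using x y by (simp add: F_def G_def)
  finally have "x + y = (\<Sum>i<n + m. F i * G i)" ..
  moreover have "\<forall>i<n + m. F i \<in> A \<and> G i \<in> B"
    using x y by (auto simp: F_def G_def)
  ultimately show ?thesis
    unfolding ideal_prod_def by blast
qed

lemma ideal_prod_least:
  assumes "0 \<in> M" and "\<And>x y. x \<in> M \<Longrightarrow> y \<in> M \<Longrightarrow> x + y \<in> M"
    and "\<And>a b. a \<in> A \<Longrightarrow> b \<in> B \<Longrightarrow> a * b \<in> M"
  shows "ideal_prod A B \<subseteq> M"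
proof
  fix x assume "x \<in> ideal_prod A B"
  then obtain n :: nat and f g where "x = (\<Sum>i<n. f i * g i)" and "\<forall>i<n. f i \<in> A \<and> g i \<in> B"
    unfolding ideal_prod_def by blast
  moreover have "\<forall>i<n. f i \<in> A \<and> g i \<in> B \<Longrightarrow> (\<Sum>i<n. f i * g i) \<in> M" for n :: nat
    by (induction n) (auto simp: assms)
  ultimately show "x \<in> M" by blast
qed

lemma ideal_prod_mono: "A \<subseteq> A' \<Longrightarrow> B \<subseteq> B' \<Longrightarrow> ideal_prod A B \<subseteq> ideal_prod A' B'"
  by (intro ideal_prod_least) auto

lemma ideal_prod_commute: "ideal_prod A B = ideal_prod B A"
proof -
  have "ideal_prod A B \<subseteq> ideal_prod B A" for A B :: "'a::field set"
  proof (rule ideal_prod_least)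
    show "a * b \<in> ideal_prod B A" if "a \<in> A" and "b \<in> B" for a b
      using mult_mem_ideal_prod[OF that(2,1)] by (simp add: mult.commute)
  qed auto
  then show ?thesis by blast
qed

lemma ideal_prod_scale:
  assumes "x \<in> ideal_prod A B" and "\<And>a. a \<in> A \<Longrightarrow> r * a \<in> A'"
  shows "r * x \<in> ideal_prod A' B"
proof -
  have "ideal_prod A B \<subseteq> {x. r * x \<in> ideal_prod A' B}"
    by (intro ideal_prod_least) (auto simp: distrib_left assms(2) simp flip: mult.assoc)
  with assms(1) show ?thesis by blast
qed

lemma ideal_prod_assoc: "ideal_prod (ideal_prod A B) C = ideal_prod A (ideal_prod B C)"
proof -
  have le: "ideal_prod (ideal_prod A B) C \<subseteq> ideal_prod A (ideal_prod B C)" for A B C :: "'a::field set"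
  proof (rule ideal_prod_least)
    fix y c assume "y \<in> ideal_prod A B" and "c \<in> C"
    have "ideal_prod A B \<subseteq> {y. y * c \<in> ideal_prod A (ideal_prod B C)}"
      using \<open>c \<in> C\<close> by (intro ideal_prod_least) (auto simp: distrib_right mult.assoc)
    with \<open>y \<in> ideal_prod A B\<close> show "y * c \<in> ideal_prod A (ideal_prod B C)" by blast
  qed auto
  have "ideal_prod A (ideal_prod B C) = ideal_prod (ideal_prod C B) A"
    by (simp add: ideal_prod_commute)
  also have "\<dots> \<subseteq> ideal_prod C (ideal_prod B A)" by (rule le)
  also have "\<dots> = ideal_prod (ideal_prod A B) C" by (simp add: ideal_prod_commute)
  finally show ?thesis using le by blast
qed

lemma ideal_prod_zero: "A \<subseteq> {0} \<Longrightarrow> ideal_prod A B \<subseteq> {0}"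
  by (intro ideal_prod_least) auto

section \<open>Fractional ideals and Picard groups\<close>

lemma
  assumes "is_subring R"
  shows subring_zero: "0 \<in> R" and subring_one: "1 \<in> R"
    and subring_add: "x \<in> R \<Longrightarrow> y \<in> R \<Longrightarrow> x + y \<in> R"
    and subring_mult: "x \<in> R \<Longrightarrow> y \<in> R \<Longrightarrow> x * y \<in> R"
  using assms unfolding is_subring_def by blast+

lemma subring_uminus: "is_subring R \<Longrightarrow> x \<in> R \<Longrightarrow> - x \<in> R"
  unfolding is_subring_def by (metis diff_0)

lemma subring_sum: "is_subring R \<Longrightarrow> (\<And>i. i \<in> S \<Longrightarrow> f i \<in> R) \<Longrightarrow> sum f S \<in> R"
  by (induction S rule: infinite_finite_induct) (auto simp: subring_zero subring_add)

lemma submodule_subring: "is_subring R \<Longrightarrow> submodule R R"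
  by (simp add: submodule_def is_subring_def)

lemma submodule_ideal_prod: "submodule R A \<Longrightarrow> submodule R (ideal_prod A B)"
  unfolding submodule_def by (auto intro: ideal_prod_scale)

lemma ideal_prod_subring_subset:
  "is_subring T \<Longrightarrow> A \<subseteq> T \<Longrightarrow> B \<subseteq> T \<Longrightarrow> ideal_prod A B \<subseteq> T"
  by (intro ideal_prod_least) (auto intro: subring_zero subring_add subring_mult)

lemma ideal_prod_submodule_subring:
  assumes "is_subring R" and "submodule R A"
  shows "ideal_prod A R = A"
proof
  show "ideal_prod A R \<subseteq> A"
    using assms(2) by (intro ideal_prod_least) (auto simp: submodule_def, metis mult.commute)
  show "A \<subseteq> ideal_prod A R"
    using mult_mem_ideal_prod[of _ A 1 R] subring_one[OF assms(1)] by auto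
qed

lemma ideal_prod_eq_subring:
  assumes "is_subring T" and "A \<subseteq> T" and "1 \<in> ideal_prod A T"
  shows "ideal_prod A T = T"
proof
  show "ideal_prod A T \<subseteq> T"
    using assms(1,2) by (rule ideal_prod_subring_subset) simp
  show "T \<subseteq> ideal_prod A T"
  proof
    fix t assume "t \<in> T"
    have "t * 1 \<in> ideal_prod T A"
      using assms(1,3) \<open>t \<in> T\<close>
      by (intro ideal_prod_scale[of 1 T A]) (auto simp: ideal_prod_commute subring_mult)
    then show "t \<in> ideal_prod A T" by (simp add: ideal_prod_commute)
  qed
qed

lemma domain_with_qf_subring: "domain_with_qf R \<Longrightarrow> is_subring R"
  by (simp add: domain_with_qf_def)

lemma domain_with_qf_fraction:
  assumes "domain_with_qf R"
  obtains a b where "a \<in> R" and "b \<in> R" and "b \<noteq> 0" and "z = a / b"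
  using assms unfolding domain_with_qf_def by blast

lemma frac_ideal_ideal_prod:
  assumes R: "is_subring R" and A: "frac_ideal R A" and B: "frac_ideal R B"
  shows "frac_ideal R (ideal_prod A B)"
proof -
  obtain d where d: "d \<in> R" "d \<noteq> 0" "\<And>a. a \<in> A \<Longrightarrow> d * a \<in> R"
    using A unfolding frac_ideal_def by blast
  obtain e where e: "e \<in> R" "e \<noteq> 0" "\<And>b. b \<in> B \<Longrightarrow> e * b \<in> R"
    using B unfolding frac_ideal_def by blast
  have "ideal_prod A B \<subseteq> {x. d * e * x \<in> R}"
  proof (rule ideal_prod_least)
    show "a * b \<in> {x. d * e * x \<in> R}" if "a \<in> A" and "b \<in> B" for a b
      using subring_mult[OF R d(3)[OF that(1)] e(3)[OF that(2)]] by (simp add: ac_simps)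
  qed (auto simp: R subring_zero subring_add distrib_left)
  then show ?thesis
    using A d e R unfolding frac_ideal_def
    by (auto simp: submodule_ideal_prod subring_mult intro!: bexI[of _ "d * e"])
qed

lemma invertible_frac_ideal_prod:
  assumes R: "is_subring R" and I: "invertible_frac R I" and J: "invertible_frac R J"
  shows "invertible_frac R (ideal_prod I J)"
proof -
  obtain I' where I': "frac_ideal R I'" "ideal_prod I I' = R"
    using I unfolding invertible_frac_def by blast
  obtain J' where J': "frac_ideal R J'" "ideal_prod J J' = R"
    using J unfolding invertible_frac_def by blast
  have "ideal_prod (ideal_prod I J) (ideal_prod I' J')
      = ideal_prod (ideal_prod I I') (ideal_prod J J')"
    by (metis ideal_prod_assoc ideal_prod_commute)
  also have "\<dots> = R"
    using I' J' R by (simp add: ideal_prod_submodule_subring submodule_subring)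
  finally show ?thesis
    using I J I' J' R unfolding invertible_frac_def by (blast intro: frac_ideal_ideal_prod)
qed

lemma invertible_frac_subring: "is_subring R \<Longrightarrow> invertible_frac R R"
  unfolding invertible_frac_def frac_ideal_def
  by (auto simp: submodule_subring ideal_prod_submodule_subring subring_one
      intro!: bexI[of _ 1] exI[of _ R])

lemma invertible_frac_inverse:
  assumes "invertible_frac R I"
  shows "\<exists>J. invertible_frac R J \<and> ideal_prod J I = R"
  using assms unfolding invertible_frac_def by (metis ideal_prod_commute)

lemma invertible_frac_nonzero:
  assumes "is_subring R" and "invertible_frac R I"
  shows "\<exists>x\<in>I. x \<noteq> 0"
proof (rule ccontr)
  assume "\<not> (\<exists>x\<in>I. x \<noteq> 0)"
  then have "ideal_prod I J \<subseteq> {0}" for J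
    by (intro ideal_prod_zero) auto
  then show False
    using assms subring_one[OF assms(1)] unfolding invertible_frac_def by force
qed

lemma comm_group_ideal_group:
  assumes R: "is_subring R"
  shows "comm_group (ideal_group R)"
proof (rule comm_groupI)
  show "\<one>\<^bsub>ideal_group R\<^esub> \<otimes>\<^bsub>ideal_group R\<^esub> x = x" if "x \<in> carrier (ideal_group R)" for x
    using that R by (simp add: ideal_group_def ideal_prod_commute[of R] ideal_prod_submodule_subring
        invertible_frac_def frac_ideal_def)
  show "\<exists>y\<in>carrier (ideal_group R). y \<otimes>\<^bsub>ideal_group R\<^esub> x = \<one>\<^bsub>ideal_group R\<^esub>"
    if "x \<in> carrier (ideal_group R)" for x
    using that invertible_frac_inverse by (simp add: ideal_group_def)
  show "x \<otimes>\<^bsub>ideal_group R\<^esub> y = y \<otimes>\<^bsub>ideal_group R\<^esub> x" for x y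
    by (simp add: ideal_group_def ideal_prod_commute)
qed (simp_all add: ideal_group_def R invertible_frac_ideal_prod invertible_frac_subring
      ideal_prod_assoc)

lemma group_ideal_group: "is_subring R \<Longrightarrow> group (ideal_group R)"
  by (rule comm_group.axioms(2)[OF comm_group_ideal_group])

definition principal_ideal :: "'k::field \<Rightarrow> 'k set \<Rightarrow> 'k set" where
  "principal_ideal x R = (\<lambda>r. x * r) ` R"

lemma principal_iff: "principal R I \<longleftrightarrow> (\<exists>x. I = principal_ideal x R)"
  by (simp add: principal_def principal_ideal_def)

lemma principal_ideal_one [simp]: "principal_ideal 1 R = R"
  by (simp add: principal_ideal_def)

lemma submodule_scaled:
  assumes "submodule R B"
  shows "submodule R ((\<lambda>b. x * b) ` B)"
  unfolding submodule_def
proof (intro conjI ballI)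
  show "0 \<in> (\<lambda>b. x * b) ` B"
    using assms by (auto simp: submodule_def intro: image_eqI[of _ _ 0])
  show "u + v \<in> (\<lambda>b. x * b) ` B" if "u \<in> (\<lambda>b. x * b) ` B" and "v \<in> (\<lambda>b. x * b) ` B" for u v
    using that assms by (auto simp: submodule_def simp flip: distrib_left)
  show "r * u \<in> (\<lambda>b. x * b) ` B" if "r \<in> R" and "u \<in> (\<lambda>b. x * b) ` B" for r u
    using that assms by (auto simp: submodule_def mult.left_commute)
qed

lemma submodule_principal_ideal: "is_subring R \<Longrightarrow> submodule R (principal_ideal x R)"
  unfolding principal_ideal_def by (intro submodule_scaled submodule_subring)

lemma ideal_prod_principal_ideal:
  assumes R: "is_subring R" and B: "submodule R B"
  shows "ideal_prod (principal_ideal x R) B = (\<lambda>b. x * b) ` B"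
proof
  show "ideal_prod (principal_ideal x R) B \<subseteq> (\<lambda>b. x * b) ` B"
  proof (rule ideal_prod_least)
    show "a * b \<in> (\<lambda>b. x * b) ` B" if "a \<in> principal_ideal x R" and "b \<in> B" for a b
      using that B by (auto simp: principal_ideal_def submodule_def mult.assoc)
  qed (use submodule_scaled[OF B, of x] in \<open>auto simp: submodule_def\<close>)
  show "(\<lambda>b. x * b) ` B \<subseteq> ideal_prod (principal_ideal x R) B"
  proof
    fix z assume "z \<in> (\<lambda>b. x * b) ` B"
    then obtain b where "b \<in> B" and "z = (x * 1) * b" by auto
    moreover have "x * 1 \<in> principal_ideal x R"
      using R by (auto simp: principal_ideal_def subring_one)
    ultimately show "z \<in> ideal_prod (principal_ideal x R) B" by auto
  qed
qed

lemma principal_ideal_mult: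
  assumes "is_subring R"
  shows "ideal_prod (principal_ideal x R) (principal_ideal y R) = principal_ideal (x * y) R"
  using assms by (simp add: ideal_prod_principal_ideal submodule_principal_ideal)
    (simp add: principal_ideal_def image_image mult.assoc)

lemma invertible_frac_principal_ideal:
  assumes R: "domain_with_qf R" and "x \<noteq> 0"
  shows "invertible_frac R (principal_ideal x R)"
proof -
  have sR: "is_subring R"
    using R by (rule domain_with_qf_subring)
  have frac: "frac_ideal R (principal_ideal y R)" for y
  proof -
    obtain a b where "a \<in> R" "b \<in> R" "b \<noteq> 0" "y = a / b"
      using R by (rule domain_with_qf_fraction)
    then have "b * (y * r) \<in> R" if "r \<in> R" for r
      using that sR by (simp add: subring_mult)
    then show ?thesis
      using \<open>b \<in> R\<close> \<open>b \<noteq> 0\<close> submodule_principal_ideal[OF sR] unfolding frac_ideal_def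
      by (auto simp: principal_ideal_def intro!: bexI[of _ b])
  qed
  show ?thesis
    using frac principal_ideal_mult[OF sR, of x "inverse x"] assms(2)
    unfolding invertible_frac_def by auto
qed

lemma principal_ideal_zero: "is_subring R \<Longrightarrow> principal_ideal 0 R = {0}"
  by (auto simp: principal_ideal_def intro: image_eqI[of _ _ 0] subring_zero)

lemma princ_iff:
  assumes "domain_with_qf R"
  shows "I \<in> princ R \<longleftrightarrow> (\<exists>x. x \<noteq> 0 \<and> I = principal_ideal x R)"
proof -
  have "is_subring R"
    using assms by (rule domain_with_qf_subring)
  then have not0: "\<not> invertible_frac R (principal_ideal 0 R)"
    using invertible_frac_nonzero by (force simp: principal_ideal_zero)
  show ?thesis
  proof
    assume "I \<in> princ R"
    then obtain x where "invertible_frac R I" and "I = principal_ideal x R"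
      by (auto simp: princ_def principal_iff)
    with not0 show "\<exists>x. x \<noteq> 0 \<and> I = principal_ideal x R"
      by (intro exI[of _ x]) auto
  qed (auto simp: princ_def principal_iff invertible_frac_principal_ideal[OF assms])
qed

lemma subgroup_princ:
  assumes R: "domain_with_qf R"
  shows "subgroup (princ R) (ideal_group R)"
proof -
  have sR: "is_subring R"
    using R by (rule domain_with_qf_subring)
  interpret G: group "ideal_group R"
    using group_ideal_group[OF sR] .
  show ?thesis
  proof (rule G.subgroupI)
    show "princ R \<subseteq> carrier (ideal_group R)"
      by (auto simp: princ_def ideal_group_def)
    have "R \<in> princ R"
      unfolding princ_iff[OF R] by (intro exI[of _ 1]) simp
    then show "princ R \<noteq> {}" by blast
    show "inv\<^bsub>ideal_group R\<^esub> I \<in> princ R" if I: "I \<in> princ R" for I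
    proof -
      obtain x where x: "x \<noteq> 0" "I = principal_ideal x R"
        using I unfolding princ_iff[OF R] by blast
      have "ideal_prod (principal_ideal (inverse x) R) I = R"
        using x principal_ideal_mult[OF sR, of "inverse x" x] by simp
      then have "inv\<^bsub>ideal_group R\<^esub> I = principal_ideal (inverse x) R"
        using x invertible_frac_principal_ideal[OF R]
        by (intro G.inv_equality) (simp_all add: ideal_group_def)
      then show ?thesis
        unfolding princ_iff[OF R] using x by (intro exI[of _ "inverse x"]) simp
    qed
    show "I \<otimes>\<^bsub>ideal_group R\<^esub> J \<in> princ R" if IJ: "I \<in> princ R" "J \<in> princ R" for I J
    proof -
      obtain x y where "x \<noteq> 0" "y \<noteq> 0" "I = principal_ideal x R" "J = principal_ideal y R"
        using IJ unfolding princ_iff[OF R] by blast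
      then show ?thesis
        unfolding princ_iff[OF R]
        by (intro exI[of _ "x * y"]) (simp add: ideal_group_def principal_ideal_mult[OF sR])
    qed
  qed
qed

lemma group_Pic: "domain_with_qf R \<Longrightarrow> group (Pic R)"
  unfolding Pic_def
  by (intro normal.factorgroup_is_group comm_group.subgroup_imp_normal comm_group_ideal_group
      subgroup_princ domain_with_qf_subring)

lemma carrier_Pic: "carrier (Pic R) = {pic_class R I | I. invertible_frac R I}"
  by (auto simp: Pic_def carrier_FactGroup pic_class_def ideal_group_def)

lemma one_Pic [simp]: "\<one>\<^bsub>Pic R\<^esub> = princ R"
  by (simp add: Pic_def)

lemma pic_class_in_carrier: "invertible_frac R I \<Longrightarrow> pic_class R I \<in> carrier (Pic R)"
  by (auto simp: carrier_Pic)

lemma mem_pic_class_iff: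
  "J \<in> pic_class R I \<longleftrightarrow> (\<exists>P\<in>princ R. J = ideal_prod P I)"
  by (auto simp: pic_class_def r_coset_def ideal_group_def)

context
  fixes R :: "'k::field set"
  assumes R: "domain_with_qf R"
begin

interpretation ideal_group: group "ideal_group R"
  using R by (simp add: group_ideal_group domain_with_qf_subring)

interpretation princ: normal "princ R" "ideal_group R"
  using R by (simp add: comm_group.subgroup_imp_normal comm_group_ideal_group subgroup_princ
      domain_with_qf_subring)

lemma pic_class_mult:
  "invertible_frac R I \<Longrightarrow> invertible_frac R J \<Longrightarrow>
    pic_class R I \<otimes>\<^bsub>Pic R\<^esub> pic_class R J = pic_class R (ideal_prod I J)"
  using princ.rcos_sum[of I J] by (simp add: Pic_def pic_class_def ideal_group_def)

lemma mem_pic_class: "invertible_frac R I \<Longrightarrow> I \<in> pic_class R I"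
  unfolding pic_class_def
  using ideal_group.rcos_self[OF _ princ.subgroup_axioms] by (simp add: ideal_group_def)

lemma pic_class_eq_one_iff:
  assumes "invertible_frac R I"
  shows "pic_class R I = princ R \<longleftrightarrow> I \<in> princ R"
proof
  show "pic_class R I = princ R \<Longrightarrow> I \<in> princ R"
    using mem_pic_class[OF assms] by simp
  show "I \<in> princ R \<Longrightarrow> pic_class R I = princ R"
    unfolding pic_class_def by (rule princ.rcos_const[OF ideal_group.is_group])
qed

lemma pic_class_principal_mult:
  assumes "invertible_frac R I" and "P \<in> princ R"
  shows "pic_class R (ideal_prod P I) = pic_class R I"
  using assms ideal_group.coset_mult_assoc[OF princ.subset, of P I]
    princ.rcos_const[OF ideal_group.is_group assms(2)]
  by (simp add: pic_class_def ideal_group_def princ_def)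

lemma pic_class_eq_if_mem:
  assumes "invertible_frac R I" and "J \<in> pic_class R I"
  shows "invertible_frac R J \<and> pic_class R J = pic_class R I"
proof -
  obtain P where "P \<in> princ R" and "J = ideal_prod P I"
    using assms mem_pic_class_iff by blast
  then show ?thesis
    using assms(1) R pic_class_principal_mult[OF assms(1)] invertible_frac_ideal_prod[of R P I]
    by (simp add: princ_def domain_with_qf_subring)
qed

end

lemma pic_class_subring:
  assumes "domain_with_qf R"
  shows "pic_class R R = princ R"
proof -
  have "R \<in> princ R"
    unfolding princ_iff[OF assms] by (intro exI[of _ 1]) simp
  then show ?thesis
    using pic_class_eq_one_iff[OF assms invertible_frac_subring[OF domain_with_qf_subring[OF assms]]]
    by simp
qed

lemma pic_class_integral_representative:
  assumes R: "domain_with_qf R" and J: "invertible_frac R J"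
  obtains J' where "invertible_frac R J'" and "J' \<subseteq> R" and "pic_class R J' = pic_class R J"
proof -
  have sR: "is_subring R"
    using R by (rule domain_with_qf_subring)
  obtain d where d: "d \<in> R" "d \<noteq> 0" "(\<lambda>x. d * x) ` J \<subseteq> R"
    using J unfolding invertible_frac_def frac_ideal_def by blast
  have P: "principal_ideal d R \<in> princ R"
    unfolding princ_iff[OF R] using d(2) by blast
  have sub: "ideal_prod (principal_ideal d R) J \<subseteq> R"
  proof (rule ideal_prod_least)
    show "u * v \<in> R" if u: "u \<in> principal_ideal d R" and v: "v \<in> J" for u v
    proof -
      obtain r where "r \<in> R" and uv: "u * v = r * (d * v)"
        using u by (auto simp: principal_ideal_def ac_simps)
      moreover have "d * v \<in> R"
        using d(3) v by blast
      ultimately show ?thesis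
        by (simp only: uv subring_mult[OF sR])
    qed
  qed (simp_all add: sR subring_zero subring_add)
  have "invertible_frac R (ideal_prod (principal_ideal d R) J)"
    using P J by (simp add: princ_def invertible_frac_ideal_prod[OF sR])
  then show ?thesis
    by (rule that[OF _ sub pic_class_principal_mult[OF R J P]])
qed

section \<open>Extension of ideals to overrings\<close>

lemma domain_with_qf_overring: "domain_with_qf D \<Longrightarrow> overring D T \<Longrightarrow> domain_with_qf T"
  unfolding domain_with_qf_def overring_def by blast

lemma ideal_prod_overring:
  assumes "is_subring T" and "D \<subseteq> T" and "1 \<in> D"
  shows "ideal_prod D T = T"
  using assms mult_mem_ideal_prod[of 1 D 1 T]
  by (intro ideal_prod_eq_subring) (auto simp: subring_one)

lemma ideal_prod_extended:
  assumes "is_subring T"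
  shows "ideal_prod (ideal_prod A T) (ideal_prod B T) = ideal_prod (ideal_prod A B) T"
proof -
  have "ideal_prod (ideal_prod A T) (ideal_prod B T) = ideal_prod A (ideal_prod (ideal_prod T B) T)"
    by (simp add: ideal_prod_assoc ideal_prod_commute[of B])
  also have "\<dots> = ideal_prod (ideal_prod A B) (ideal_prod T T)"
    by (simp add: ideal_prod_assoc ideal_prod_commute[of T B])
  also have "ideal_prod T T = T"
    using assms by (simp add: ideal_prod_submodule_subring submodule_subring)
  finally show ?thesis .
qed

lemma frac_ideal_extended:
  assumes T: "is_subring T" and "D \<subseteq> T" and "frac_ideal D I"
  shows "frac_ideal T (ideal_prod I T)"
proof -
  obtain d where d: "d \<in> D" "d \<noteq> 0" "\<And>a. a \<in> I \<Longrightarrow> d * a \<in> D"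
    using assms(3) unfolding frac_ideal_def by blast
  have "ideal_prod I T \<subseteq> {x. d * x \<in> T}"
  proof (rule ideal_prod_least)
    show "a * t \<in> {x. d * x \<in> T}" if "a \<in> I" and "t \<in> T" for a t
      using subring_mult[OF T _ \<open>t \<in> T\<close>, of "d * a"] d(3)[OF \<open>a \<in> I\<close>] \<open>D \<subseteq> T\<close>
      by (auto simp: mult.assoc)
  qed (auto simp: T subring_zero subring_add distrib_left)
  moreover have "submodule T (ideal_prod I T)"
    using submodule_ideal_prod[OF submodule_subring[OF T], of I] by (simp add: ideal_prod_commute)
  ultimately show ?thesis
    using d \<open>D \<subseteq> T\<close> unfolding frac_ideal_def by blast
qed

lemma invertible_frac_extended:
  assumes "is_subring T" and "D \<subseteq> T" and "is_subring D" and "invertible_frac D I"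
  shows "invertible_frac T (ideal_prod I T)"
proof -
  obtain I' where I': "frac_ideal D I'" "ideal_prod I I' = D"
    using assms(4) unfolding invertible_frac_def by blast
  then have "ideal_prod (ideal_prod I T) (ideal_prod I' T) = T"
    using ideal_prod_overring[OF assms(1,2) subring_one[OF assms(3)]]
    by (simp add: ideal_prod_extended[OF assms(1)])
  moreover have "frac_ideal T (ideal_prod I T)" and "frac_ideal T (ideal_prod I' T)"
    using assms(4) I'(1) frac_ideal_extended[OF assms(1,2)] by (auto simp: invertible_frac_def)
  ultimately show ?thesis
    unfolding invertible_frac_def by blast
qed

lemma principal_ideal_extended:
  assumes "is_subring D" and "D \<subseteq> T" and "is_subring T"
  shows "ideal_prod (principal_ideal x D) T = principal_ideal x T"
proof -
  have "submodule D T"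
    unfolding submodule_def
  proof (intro conjI ballI)
    show "r * t \<in> T" if "r \<in> D" and "t \<in> T" for r t
      using that assms(2) subring_mult[OF assms(3)] by blast
  qed (simp_all add: assms(3) subring_zero subring_add)
  then show ?thesis
    using ideal_prod_principal_ideal[OF assms(1)] by (simp add: principal_ideal_def)
qed

lemma pic_class_extended_cong:
  assumes D: "domain_with_qf D" and T: "overring D T" and I: "invertible_frac D I"
    and J: "J \<in> pic_class D I"
  shows "pic_class T (ideal_prod J T) = pic_class T (ideal_prod I T)"
proof -
  have sD: "is_subring D" and sT: "is_subring T" and DT: "D \<subseteq> T"
    using D T by (simp_all add: domain_with_qf_subring overring_def)
  obtain P where "P \<in> princ D" and "J = ideal_prod P I"
    using J unfolding mem_pic_class_iff by blast
  then obtain x where "x \<noteq> 0" and "J = ideal_prod (principal_ideal x D) I"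
    unfolding princ_iff[OF D] by blast
  then have "ideal_prod J T = ideal_prod (principal_ideal x T) (ideal_prod I T)"
    using ideal_prod_extended[OF sT, of "principal_ideal x D" I]
      principal_ideal_extended[OF sD DT sT] by simp
  moreover have "principal_ideal x T \<in> princ T"
    unfolding princ_iff[OF domain_with_qf_overring[OF D T]] using \<open>x \<noteq> 0\<close> by blast
  ultimately show ?thesis
    using pic_class_principal_mult[OF domain_with_qf_overring[OF D T]]
      invertible_frac_extended[OF sT DT sD I] by simp
qed

lemma ideal_prod_eq_principal_ideal_inverse:
  assumes T: "is_subring T" and d: "\<And>u. u \<in> I \<Longrightarrow> d * u \<in> T"
    and "i \<in> I" and "y \<in> T" and inv: "d * i * y = 1"
  shows "ideal_prod I T = principal_ideal (inverse d) T"
proof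
  have "d \<noteq> 0"
    using inv by auto
  show "ideal_prod I T \<subseteq> principal_ideal (inverse d) T"
  proof (rule ideal_prod_least)
    show "u * t \<in> principal_ideal (inverse d) T" if "u \<in> I" and "t \<in> T" for u t
    proof -
      have "d * u * t \<in> T"
        using d[OF \<open>u \<in> I\<close>] \<open>t \<in> T\<close> T by (simp add: subring_mult)
      moreover have "u * t = inverse d * (d * u * t)"
        using \<open>d \<noteq> 0\<close> by simp
      ultimately show ?thesis
        unfolding principal_ideal_def by blast
    qed
  qed (use submodule_principal_ideal[OF T] in \<open>auto simp: submodule_def\<close>)
  show "principal_ideal (inverse d) T \<subseteq> ideal_prod I T"
  proof
    fix z assume "z \<in> principal_ideal (inverse d) T"
    then obtain t where "t \<in> T" and "z = inverse d * t"
      by (auto simp: principal_ideal_def)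
    moreover have "inverse d = i * y"
      using inv by (metis inverse_unique mult.assoc)
    ultimately have "z = i * (y * t)"
      by (simp add: mult.assoc)
    then show "z \<in> ideal_prod I T"
      using \<open>i \<in> I\<close> \<open>y \<in> T\<close> \<open>t \<in> T\<close> T by (simp add: subring_mult mult_mem_ideal_prod)
  qed
qed

context
  fixes D :: "'k::field set" and \<Theta> :: "'k set set"
  assumes D: "domain_with_qf D" and overrings: "\<And>T. T \<in> \<Theta> \<Longrightarrow> overring D T"
begin

lemma invertible_frac_extended_member:
  assumes "invertible_frac D I" and "T \<in> \<Theta>"
  shows "invertible_frac T (ideal_prod I T)"
  using overrings[OF assms(2)] domain_with_qf_subring[OF D] assms(1)
  unfolding overring_def by (intro invertible_frac_extended) simp_all

lemma pic_map_class:
  assumes I: "invertible_frac D I"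
  shows "pic_map D \<Theta> (pic_class D I) = (\<lambda>T\<in>\<Theta>. pic_class T (ideal_prod I T))"
proof -
  have "(SOME J. J \<in> pic_class D I) \<in> pic_class D I"
    using mem_pic_class[OF D I] by (rule someI)
  then show ?thesis
    unfolding pic_map_def by (intro restrict_ext pic_class_extended_cong[OF D overrings I])
qed

lemma pic_map_class_eq_one_iff:
  assumes I: "invertible_frac D I"
  shows "pic_map D \<Theta> (pic_class D I) = \<one>\<^bsub>sum_group \<Theta> Pic\<^esub> \<longleftrightarrow> (\<forall>T\<in>\<Theta>. principal T (ideal_prod I T))"
proof -
  have "pic_class T (ideal_prod I T) = princ T \<longleftrightarrow> principal T (ideal_prod I T)" if "T \<in> \<Theta>" for T
    using pic_class_eq_one_iff[OF domain_with_qf_overring[OF D overrings[OF that]]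
        invertible_frac_extended_member[OF I that]] invertible_frac_extended_member[OF I that]
    by (simp add: princ_def)
  moreover have "(\<lambda>T\<in>\<Theta>. pic_class T (ideal_prod I T)) = (\<lambda>T\<in>\<Theta>. princ T) \<longleftrightarrow>
      (\<forall>T\<in>\<Theta>. pic_class T (ideal_prod I T) = princ T)"
    by (auto simp: fun_eq_iff)
  ultimately show ?thesis
    by (simp add: pic_map_class[OF I])
qed

lemma kernel_pic_map: "kernel (Pic D) (sum_group \<Theta> Pic) (pic_map D \<Theta>) = Pic_rel D \<Theta>"
proof (intro equalityI subsetI)
  fix c assume "c \<in> kernel (Pic D) (sum_group \<Theta> Pic) (pic_map D \<Theta>)"
  then have c: "c \<in> carrier (Pic D)" and one: "pic_map D \<Theta> c = \<one>\<^bsub>sum_group \<Theta> Pic\<^esub>"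
    unfolding kernel_def by simp_all
  then obtain I where I: "invertible_frac D I" and "c = pic_class D I"
    unfolding carrier_Pic by blast
  then have "I \<in> c" and "\<forall>T\<in>\<Theta>. principal T (ideal_prod I T)"
    using one mem_pic_class[OF D I] pic_map_class_eq_one_iff[OF I] by simp_all
  then show "c \<in> Pic_rel D \<Theta>"
    using c unfolding Pic_rel_def by blast
next
  fix c assume "c \<in> Pic_rel D \<Theta>"
  then obtain I where c: "c \<in> carrier (Pic D)" and "I \<in> c"
    and principal: "\<forall>T\<in>\<Theta>. principal T (ideal_prod I T)"
    unfolding Pic_rel_def by blast
  obtain I0 where I0: "invertible_frac D I0" and "c = pic_class D I0"
    using c unfolding carrier_Pic by blast
  then have I: "invertible_frac D I" and "c = pic_class D I"
    using pic_class_eq_if_mem[OF D I0, of I] \<open>I \<in> c\<close> by auto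
  then have "pic_map D \<Theta> c = \<one>\<^bsub>sum_group \<Theta> Pic\<^esub>"
    using principal pic_map_class_eq_one_iff[OF I] by simp
  then show "c \<in> kernel (Pic D) (sum_group \<Theta> Pic) (pic_map D \<Theta>)"
    using c unfolding kernel_def by simp
qed

end

section \<open>Flat overrings\<close>

definition colon :: "'k::field set \<Rightarrow> 'k set \<Rightarrow> 'k set" where
  "colon R A = {x. \<forall>a\<in>A. x * a \<in> R}"

lemma ring_ideal_colon:
  assumes "is_subring D" and "is_subring R" and "D \<subseteq> R"
  shows "ring_ideal D (D \<inter> colon R A)"
  unfolding ring_ideal_def submodule_def colon_def
proof (intro conjI ballI)
  show "r * x \<in> D \<inter> {x. \<forall>a\<in>A. x * a \<in> R}" if "r \<in> D" and "x \<in> D \<inter> {x. \<forall>a\<in>A. x * a \<in> R}" for r x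
    using that assms subring_mult[OF assms(2), of r "x * _"] by (auto simp: subring_mult mult.assoc)
qed (auto simp: assms subring_zero subring_add distrib_right)

lemma one_mem_ideal_prod_Inter:
  assumes D: "is_subring D" and T: "is_subring T" and "finite F"
    and ideal: "\<And>i. i \<in> F \<Longrightarrow> ring_ideal D (A i)"
    and one: "\<And>i. i \<in> F \<Longrightarrow> 1 \<in> ideal_prod (A i) T"
  shows "1 \<in> ideal_prod (D \<inter> (\<Inter>i\<in>F. A i)) T"
  using assms(3) ideal one
proof (induction F)
  case empty
  show ?case
    using mult_mem_ideal_prod[of 1 D 1 T] D T by (simp add: subring_one)
next
  case (insert j F)
  have "1 * 1 \<in> ideal_prod (ideal_prod (D \<inter> (\<Inter>i\<in>F. A i)) T) (ideal_prod (A j) T)"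
    using insert by (intro mult_mem_ideal_prod) auto
  then have "1 \<in> ideal_prod (ideal_prod (D \<inter> (\<Inter>i\<in>F. A i)) (A j)) T"
    by (simp add: ideal_prod_extended[OF T])
  moreover have "ideal_prod (D \<inter> (\<Inter>i\<in>F. A i)) (A j) \<subseteq> D \<inter> (\<Inter>i\<in>insert j F. A i)"
  proof (rule ideal_prod_least)
    have ideals: "ring_ideal D (A i)" if "i \<in> insert j F" for i
      using insert.prems that by blast
    then show "0 \<in> D \<inter> (\<Inter>i\<in>insert j F. A i)" and
      "\<And>x y. x \<in> D \<inter> (\<Inter>i\<in>insert j F. A i) \<Longrightarrow> y \<in> D \<inter> (\<Inter>i\<in>insert j F. A i) \<Longrightarrow>
        x + y \<in> D \<inter> (\<Inter>i\<in>insert j F. A i)"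
      using D by (auto simp: ring_ideal_def submodule_def subring_zero subring_add)
    show "a * b \<in> D \<inter> (\<Inter>i\<in>insert j F. A i)" if "a \<in> D \<inter> (\<Inter>i\<in>F. A i)" and "b \<in> A j" for a b
    proof -
      have "b \<in> D" and "a * b \<in> A j"
        using that ideals[of j] by (auto simp: ring_ideal_def submodule_def)
      moreover have "a * b \<in> A i" if "i \<in> F" for i
        using \<open>b \<in> D\<close> \<open>a \<in> D \<inter> (\<Inter>i\<in>F. A i)\<close> ideals[of i] that
        by (auto simp: ring_ideal_def submodule_def mult.commute)
      ultimately show ?thesis
        using \<open>a \<in> D \<inter> (\<Inter>i\<in>F. A i)\<close> subring_mult[OF D] by auto
    qed
  qed
  ultimately show ?case
    using ideal_prod_mono[of _ _ T T] by blast
qed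

context
  fixes D T :: "'k::field set"
  assumes D: "domain_with_qf D" and T: "overring D T" and flat: "flat_over D T"
begin

lemma one_mem_ideal_prod_colon_singleton:
  assumes x: "x \<in> T"
  shows "1 \<in> ideal_prod (D \<inter> colon D {x}) T"
proof -
  \<comment> \<open>Apply the equational criterion to the relation \<open>a * 1 + (- b) * x = 0\<close> for \<open>x = a / b\<close>:
    it writes \<open>1 = (\<Sum>j. c 0 j * y j)\<close> with \<open>c 0 j * x = c 1 j \<in> D\<close>.\<close>
  have sD: "is_subring D" and sT: "is_subring T"
    using D T by (simp_all add: domain_with_qf_subring overring_def)
  obtain a b where ab: "a \<in> D" "b \<in> D" "b \<noteq> 0" "x = a / b"
    using D by (rule domain_with_qf_fraction)
  define A where "A i = (if i = (0::nat) then a else - b)" for i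
  define X where "X i = (if i = (0::nat) then 1 else x)" for i
  have rel0: "\<forall>i<2. A i \<in> D \<and> X i \<in> T"
    using ab sD sT x by (auto simp: A_def X_def subring_one subring_uminus)
  have rel1: "(\<Sum>i<2. A i * X i) = 0"
    using ab by (simp add: numeral_2_eq_2 A_def X_def)
  obtain m :: nat and c y where
    y: "\<forall>j<m. y j \<in> T" and c: "\<forall>i<2. \<forall>j<m. c i j \<in> D"
    and X: "\<forall>i<2. X i = (\<Sum>j<m. c i j * y j)" and rel: "\<forall>j<m. (\<Sum>i<2. A i * c i j) = 0"
    using flat[unfolded flat_over_def, rule_format, of 2 A X, OF conjI[OF rel0 rel1]] by blast
  have "c 0 j \<in> D \<inter> colon D {x}" if "j < m" for j
  proof -
    have "b * (c 0 j * x) = a * c 0 j"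
      using ab(3,4) by simp
    also have "\<dots> = b * c 1 j"
      using rel that by (simp add: numeral_2_eq_2 A_def)
    finally have "c 0 j * x = c 1 j"
      using ab(3) by simp
    then show ?thesis
      using c that by (simp add: colon_def)
  qed
  moreover have "1 = (\<Sum>j<m. c 0 j * y j)"
    using X[rule_format, of 0] by (simp add: X_def)
  ultimately show ?thesis
    using y unfolding ideal_prod_def by blast
qed

lemma one_mem_ideal_prod_colon:
  assumes "finite S" and "S \<subseteq> T"
  shows "1 \<in> ideal_prod (D \<inter> colon D S) T"
proof -
  have sD: "is_subring D" and sT: "is_subring T"
    using D T by (simp_all add: domain_with_qf_subring overring_def)
  have "D \<inter> colon D S = D \<inter> (\<Inter>s\<in>S. D \<inter> colon D {s})"
    by (auto simp: colon_def)
  moreover have "1 \<in> ideal_prod (D \<inter> (\<Inter>s\<in>S. D \<inter> colon D {s})) T"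
    using assms one_mem_ideal_prod_colon_singleton ring_ideal_colon[OF sD sD]
    by (intro one_mem_ideal_prod_Inter[OF sD sT]) auto
  ultimately show ?thesis by simp
qed

lemma contraction_extension:
  assumes "submodule T J" and "J \<subseteq> T"
  shows "ideal_prod (J \<inter> D) T = J"
proof
  show "ideal_prod (J \<inter> D) T \<subseteq> J"
    using assms(1) by (intro ideal_prod_least) (auto simp: submodule_def, metis mult.commute)
  show "J \<subseteq> ideal_prod (J \<inter> D) T"
  proof
    fix x assume "x \<in> J"
    have "x * 1 \<in> ideal_prod (J \<inter> D) T"
    proof (rule ideal_prod_scale[OF one_mem_ideal_prod_colon_singleton])
      show "x \<in> T"
        using \<open>x \<in> J\<close> assms(2) by blast
      show "x * c \<in> J \<inter> D" if "c \<in> D \<inter> colon D {x}" for c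
        using that \<open>x \<in> J\<close> assms(1) T
        by (auto simp: submodule_def colon_def overring_def mult.commute)
    qed
    then show "x \<in> ideal_prod (J \<inter> D) T" by simp
  qed
qed

end

section \<open>Direct sums of groups\<close>

lemma carrier_sum_group_subset:
  assumes G: "\<And>i. i \<in> I \<Longrightarrow> group (G i)" and H: "subgroup H (sum_group I G)"
    and single: "\<And>j x. j \<in> I \<Longrightarrow> x \<in> carrier (G j) \<Longrightarrow> (\<lambda>i\<in>I. if i = j then x else \<one>\<^bsub>G i\<^esub>) \<in> H"
  shows "carrier (sum_group I G) \<subseteq> H"
proof
  fix x assume x: "x \<in> carrier (sum_group I G)"
  have "y \<in> H" if "finite F" and "y \<in> carrier (sum_group I G)" and "{i \<in> I. y i \<noteq> \<one>\<^bsub>G i\<^esub>} \<subseteq> F" for F y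
    using that
  proof (induction F arbitrary: y)
    case empty
    then have "y = \<one>\<^bsub>sum_group I G\<^esub>"
      by (auto simp: carrier_sum_group G PiE_iff extensional_def)
    then show ?case
      using subgroup.one_closed[OF H] by (simp only:)
  next
    case (insert j F)
    show ?case
    proof (cases "j \<in> I")
      case False
      then show ?thesis
        using insert by blast
    next
      case True
      define y' where "y' = (\<lambda>i\<in>I. if i = j then \<one>\<^bsub>G i\<^esub> else y i)"
      have y: "y \<in> (\<Pi>\<^sub>E i\<in>I. carrier (G i))" and fin: "finite {i \<in> I. y i \<noteq> \<one>\<^bsub>G i\<^esub>}"
        using insert.prems(1) by (simp_all add: carrier_sum_group G)
      have "y' \<in> carrier (sum_group I G)"
        using y fin G by (auto simp: y'_def carrier_sum_group PiE_iff group.is_monoid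
            elim: rev_finite_subset)
      moreover have "{i \<in> I. y' i \<noteq> \<one>\<^bsub>G i\<^esub>} \<subseteq> F"
        using insert.prems(2) by (auto simp: y'_def)
      ultimately have "y' \<in> H"
        by (rule insert.IH)
      moreover have "y = y' \<otimes>\<^bsub>sum_group I G\<^esub> (\<lambda>i\<in>I. if i = j then y j else \<one>\<^bsub>G i\<^esub>)"
        using y G by (auto simp: y'_def PiE_iff extensional_def fun_eq_iff group.is_monoid)
      moreover have "(\<lambda>i\<in>I. if i = j then y j else \<one>\<^bsub>G i\<^esub>) \<in> H"
        using y True by (intro single) auto
      ultimately show ?thesis
        using subgroup.m_closed[OF H] by metis
    qed
  qed
  moreover have "finite {i \<in> I. x i \<noteq> \<one>\<^bsub>G i\<^esub>}"
    using x by (simp add: carrier_sum_group G)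
  ultimately show "x \<in> H"
    using x by blast
qed

section \<open>Jaffard families\<close>

locale jaffard_family =
  fixes D :: "'k::field set" and \<Theta> :: "'k set set"
  assumes domain: "domain_with_qf D" and jaffard: "jaffard D \<Theta>"
begin

lemma subring: "is_subring D"
  using domain by (rule domain_with_qf_subring)

lemma overring: "T \<in> \<Theta> \<Longrightarrow> overring D T"
  and flat: "T \<in> \<Theta> \<Longrightarrow> flat_over D T"
  and complete: "ring_ideal D I \<Longrightarrow> I = (\<Inter>T\<in>\<Theta>. ideal_prod I T)"
  and independent: "T \<in> \<Theta> \<Longrightarrow> T' \<in> \<Theta> \<Longrightarrow> T \<noteq> T' \<Longrightarrow> ideal_prod T T' = UNIV"
  and locally_finite: "x \<in> D \<Longrightarrow> x \<noteq> 0 \<Longrightarrow> finite {T \<in> \<Theta>. \<not> (\<exists>y\<in>T. x * y = 1)}"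
  using jaffard unfolding jaffard_def pre_jaffard_def by blast+

lemma member_subring: "T \<in> \<Theta> \<Longrightarrow> is_subring T"
  and subset_member: "T \<in> \<Theta> \<Longrightarrow> D \<subseteq> T"
  using overring by (simp_all add: overring_def)

lemma member_domain: "T \<in> \<Theta> \<Longrightarrow> domain_with_qf T"
  using domain overring by (rule domain_with_qf_overring)

lemma Inter_members: "\<Inter>\<Theta> = D"
proof -
  have "ring_ideal D D"
    using subring by (simp add: ring_ideal_def submodule_subring)
  then have "D = (\<Inter>T\<in>\<Theta>. ideal_prod D T)"
    by (rule complete)
  also have "\<dots> = \<Inter>\<Theta>"
    using ideal_prod_overring[OF member_subring subset_member subring_one[OF subring]] by simp
  finally show ?thesis ..
qed

lemma one_mem_ideal_prod_principal_contraction: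
  assumes T: "T \<in> \<Theta>" and T': "T' \<in> \<Theta>" "T \<noteq> T'" and a: "a \<in> D" "a \<noteq> 0"
  shows "1 \<in> ideal_prod (D \<inter> principal_ideal a T) T'"
proof -
  have "inverse a \<in> ideal_prod T T'"
    using independent[OF T T'] by simp
  then obtain n :: nat and f g where fg: "inverse a = (\<Sum>i<n. f i * g i)" "\<forall>i<n. f i \<in> T \<and> g i \<in> T'"
    unfolding ideal_prod_def by blast
  have "D \<inter> colon D (g ` {..<n}) \<subseteq> D \<inter> principal_ideal a T"
  proof
    fix c assume c: "c \<in> D \<inter> colon D (g ` {..<n})"
    have "c * g i \<in> T" if "i < n" for i
      using c that subset_member[OF T] by (auto simp: colon_def)
    then have "(\<Sum>i<n. f i * (c * g i)) \<in> T"
      using fg(2) member_subring[OF T] by (intro subring_sum) (auto simp: subring_mult)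
    moreover have "(\<Sum>i<n. f i * (c * g i)) = c * inverse a"
      using fg(1) by (simp add: sum_distrib_left ac_simps)
    then have "c = a * (\<Sum>i<n. f i * (c * g i))"
      using a(2) by simp
    ultimately show "c \<in> D \<inter> principal_ideal a T"
      using c by (auto simp: principal_ideal_def)
  qed
  moreover have "1 \<in> ideal_prod (D \<inter> colon D (g ` {..<n})) T'"
    using fg(2) by (intro one_mem_ideal_prod_colon domain overring[OF T'(1)] flat[OF T'(1)]) auto
  ultimately show ?thesis
    using ideal_prod_mono[of _ _ T' T'] by blast
qed

lemma one_mem_ideal_prod_colon_away:
  assumes T0: "T0 \<in> \<Theta>"
  shows "1 \<in> ideal_prod (D \<inter> (\<Inter>T\<in>\<Theta> - {T0}. colon T {h})) T0"
proof -
  \<comment> \<open>Writing \<open>h = p / q\<close>, only the finitely many members in which \<open>q\<close> is not a unit impose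
    a condition, and for each of them independence gives \<open>1 \<in> (qT \<inter> D)T0\<close>.\<close>
  obtain p q where pq: "p \<in> D" "q \<in> D" "q \<noteq> 0" "h = p / q"
    using domain by (rule domain_with_qf_fraction)
  define F where "F = {T \<in> \<Theta>. T \<noteq> T0 \<and> \<not> (\<exists>y\<in>T. q * y = 1)}"
  have "finite F"
    using locally_finite[OF pq(2,3)] by (rule rev_finite_subset) (auto simp: F_def)
  have "1 \<in> ideal_prod (D \<inter> colon T {h}) T0" if "T \<in> F" for T
  proof -
    have T: "T \<in> \<Theta>" "T \<noteq> T0"
      using that by (auto simp: F_def)
    have "D \<inter> principal_ideal q T \<subseteq> D \<inter> colon T {h}"
      using pq subset_member[OF T(1)] subring_mult[OF member_subring[OF T(1)]]
      by (auto simp: principal_ideal_def colon_def ac_simps)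
    then show ?thesis
      using one_mem_ideal_prod_principal_contraction[OF T(1) T0 T(2) pq(2,3)]
        ideal_prod_mono[of _ _ T0 T0] by blast
  qed
  then have "1 \<in> ideal_prod (D \<inter> (\<Inter>T\<in>F. D \<inter> colon T {h})) T0"
    using \<open>finite F\<close> ring_ideal_colon[OF subring member_subring subset_member]
    by (intro one_mem_ideal_prod_Inter subring member_subring[OF T0]) (auto simp: F_def)
  moreover have "D \<inter> (\<Inter>T\<in>F. D \<inter> colon T {h}) \<subseteq> D \<inter> (\<Inter>T\<in>\<Theta> - {T0}. colon T {h})"
  proof (intro subsetI IntI INT_I)
    fix c T assume c: "c \<in> D \<inter> (\<Inter>T\<in>F. D \<inter> colon T {h})" and "T \<in> \<Theta> - {T0}"
    then have T: "T \<in> \<Theta>" "T \<noteq> T0" by auto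
    show "c \<in> colon T {h}"
    proof (cases "T \<in> F")
      case False
      then obtain y where "y \<in> T" and "q * y = 1"
        using T by (auto simp: F_def)
      then have ch: "c * h = c * p * y"
        using pq(4) inverse_unique[of q y] by (simp add: divide_inverse)
      moreover have "c \<in> T" and "p \<in> T"
        using c pq(1) subset_member[OF T(1)] by auto
      then have "c * p * y \<in> T"
        using \<open>y \<in> T\<close> member_subring[OF T(1)] by (simp add: subring_mult)
      then have "c * h \<in> T"
        unfolding ch .
      then show ?thesis
        by (simp add: colon_def)
    qed (use c in blast)
  qed blast
  ultimately show ?thesis
    using ideal_prod_mono[of _ _ T0 T0] by blast
qed

lemma invertible_frac_if_locally_invertible:
  assumes I: "ring_ideal D I" and a: "a \<in> I" "a \<noteq> 0"
    and local: "\<And>T. T \<in> \<Theta> \<Longrightarrow> 1 \<in> ideal_prod (ideal_prod I (colon D I)) T"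
  shows "invertible_frac D I"
proof -
  have sI: "submodule D I" and "I \<subseteq> D"
    using I by (simp_all add: ring_ideal_def)
  have sI': "submodule D (colon D I)"
    using subring by (auto simp: submodule_def colon_def subring_zero subring_add subring_mult
        distrib_right mult.assoc)
  have "ideal_prod I (colon D I) \<subseteq> D"
    using subring by (intro ideal_prod_least) (auto simp: colon_def subring_zero subring_add mult.commute)
  then have N: "ring_ideal D (ideal_prod I (colon D I))"
    using submodule_ideal_prod[OF sI] by (simp add: ring_ideal_def)
  then have "1 \<in> ideal_prod I (colon D I)"
    using complete[OF N] local by blast
  then have "ideal_prod I (colon D I) = D"
    using N subring unfolding ring_ideal_def submodule_def
    by (metis mult.right_neutral subset_antisym subsetI)
  moreover have "frac_ideal D I"
    using sI \<open>I \<subseteq> D\<close> subring unfolding frac_ideal_def by (auto intro!: bexI[of _ 1] subring_one)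
  moreover have "frac_ideal D (colon D I)"
    using sI' a \<open>I \<subseteq> D\<close> unfolding frac_ideal_def by (auto simp: colon_def mult.commute)
  ultimately show ?thesis
    unfolding invertible_frac_def by blast
qed

lemma colon_subset_ideal_prod_colon_contraction:
  assumes T0: "T0 \<in> \<Theta>" and h: "h \<in> colon T0 J"
  shows "h \<in> ideal_prod (colon D (J \<inter> D)) T0"
proof -
  have "h * c \<in> colon D (J \<inter> D)" if c: "c \<in> D \<inter> (\<Inter>T\<in>\<Theta> - {T0}. colon T {h})" for c
  proof -
    have "h * c * i \<in> T" if i: "i \<in> J \<inter> D" and T: "T \<in> \<Theta>" for i T
    proof (cases "T = T0")
      case True
      have "h * i \<in> T0" and "c \<in> T0"
        using h i c subset_member[OF T0] by (auto simp: colon_def)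
      then show ?thesis
        using True member_subring[OF T0] subring_mult by (fastforce simp: ac_simps)
    next
      case False
      have "c * h \<in> T" and "i \<in> T"
        using c i T False subset_member[OF T] by (auto simp: colon_def)
      then show ?thesis
        using member_subring[OF T] subring_mult by (fastforce simp: ac_simps)
    qed
    then have "h * c * i \<in> D" if "i \<in> J \<inter> D" for i
      using that Inter_members by blast
    then show ?thesis
      by (simp add: colon_def)
  qed
  then have "h * 1 \<in> ideal_prod (colon D (J \<inter> D)) T0"
    by (intro ideal_prod_scale[OF one_mem_ideal_prod_colon_away[OF T0]])
  then show ?thesis by simp
qed

lemma ideal_prod_contraction_other_member:
  assumes T0: "T0 \<in> \<Theta>" and T: "T \<in> \<Theta>" "T \<noteq> T0" and J: "submodule T0 J"
    and a: "a \<in> J \<inter> D" "a \<noteq> 0"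
  shows "ideal_prod (J \<inter> D) T = T"
proof (rule ideal_prod_eq_subring[OF member_subring[OF T(1)]])
  show "J \<inter> D \<subseteq> T"
    using subset_member[OF T(1)] by blast
  have "D \<inter> principal_ideal a T0 \<subseteq> J \<inter> D"
    using a J by (auto simp: principal_ideal_def submodule_def mult.commute)
  then show "1 \<in> ideal_prod (J \<inter> D) T"
    using one_mem_ideal_prod_principal_contraction[OF T0 T(1) T(2)[symmetric]] a
      ideal_prod_mono[of _ _ T T] by blast
qed

lemma one_mem_ideal_prod_colon_contraction:
  assumes T0: "T0 \<in> \<Theta>" and J: "invertible_frac T0 J" "J \<subseteq> T0"
  shows "1 \<in> ideal_prod (ideal_prod (J \<inter> D) (colon D (J \<inter> D))) T0"
proof -
  obtain H where H: "ideal_prod J H = T0"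
    using J(1) by (auto simp: invertible_frac_def)
  have "H \<subseteq> colon T0 J"
  proof
    fix h assume "h \<in> H"
    then have "j * h \<in> T0" if "j \<in> J" for j
      using that H mult_mem_ideal_prod by blast
    then show "h \<in> colon T0 J"
      by (simp add: colon_def mult.commute)
  qed
  then have "H \<subseteq> ideal_prod (colon D (J \<inter> D)) T0"
    using colon_subset_ideal_prod_colon_contraction[OF T0] by blast
  moreover have "ideal_prod (J \<inter> D) T0 = J"
    using J(1) by (intro contraction_extension domain overring[OF T0] flat[OF T0] J(2))
      (simp add: invertible_frac_def frac_ideal_def)
  ultimately have "ideal_prod J H \<subseteq> ideal_prod (ideal_prod (J \<inter> D) T0) (ideal_prod (colon D (J \<inter> D)) T0)"
    by (simp add: ideal_prod_mono)
  then have "T0 \<subseteq> ideal_prod (ideal_prod (J \<inter> D) (colon D (J \<inter> D))) T0"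
    by (simp add: H ideal_prod_extended member_subring[OF T0])
  then show ?thesis
    using subring_one[OF member_subring[OF T0]] by blast
qed

lemma contraction_invertible:
  assumes T0: "T0 \<in> \<Theta>" and J: "invertible_frac T0 J" "J \<subseteq> T0"
  shows "invertible_frac D (J \<inter> D)" and "ideal_prod (J \<inter> D) T0 = J"
    and "\<And>T. T \<in> \<Theta> \<Longrightarrow> T \<noteq> T0 \<Longrightarrow> ideal_prod (J \<inter> D) T = T"
proof -
  have sJ: "submodule T0 J"
    using J(1) by (simp add: invertible_frac_def frac_ideal_def)
  show ext: "ideal_prod (J \<inter> D) T0 = J"
    using contraction_extension[OF domain overring[OF T0] flat[OF T0] sJ J(2)] .
  obtain a where a: "a \<in> J \<inter> D" "a \<noteq> 0"
  proof -
    have "\<not> J \<subseteq> {0}"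
      using invertible_frac_nonzero[OF member_subring[OF T0] J(1)] by blast
    then have "\<not> J \<inter> D \<subseteq> {0}"
      using ext ideal_prod_zero[of "J \<inter> D" T0] by auto
    then show ?thesis
      using that by blast
  qed
  show other: "\<And>T. T \<in> \<Theta> \<Longrightarrow> T \<noteq> T0 \<Longrightarrow> ideal_prod (J \<inter> D) T = T"
    using ideal_prod_contraction_other_member[OF T0 _ _ sJ a] .
  show "invertible_frac D (J \<inter> D)"
  proof (rule invertible_frac_if_locally_invertible[OF _ a])
    show "ring_ideal D (J \<inter> D)"
      using sJ subset_member[OF T0]
      by (auto simp: ring_ideal_def submodule_def subring_zero[OF subring] subring_add[OF subring]
          subring_mult[OF subring])
    show "1 \<in> ideal_prod (ideal_prod (J \<inter> D) (colon D (J \<inter> D))) T" if T: "T \<in> \<Theta>" for T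
    proof (cases "T = T0")
      case True
      then show ?thesis
        using one_mem_ideal_prod_colon_contraction[OF T0 J] by simp
    next
      case False
      have "J \<inter> D \<subseteq> ideal_prod (J \<inter> D) (colon D (J \<inter> D))"
        using mult_mem_ideal_prod[of _ "J \<inter> D" 1 "colon D (J \<inter> D)"] by (auto simp: colon_def)
      then have "T \<subseteq> ideal_prod (ideal_prod (J \<inter> D) (colon D (J \<inter> D))) T"
        using other[OF T False] ideal_prod_mono[of "J \<inter> D" _ T T] by simp
      then show ?thesis
        using subring_one[OF member_subring[OF T]] by blast
    qed
  qed
qed

lemma group_Pic_member: "T \<in> \<Theta> \<Longrightarrow> group (Pic T)"
  using member_domain by (rule group_Pic)

lemma carrier_sum_group_Pic:
  "carrier (sum_group \<Theta> Pic) = {x \<in> \<Pi>\<^sub>E T\<in>\<Theta>. carrier (Pic T). finite {T \<in> \<Theta>. x T \<noteq> princ T}}"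
  by (simp add: carrier_sum_group group_Pic_member)

lemma finite_nonprincipal_extensions:
  assumes I: "invertible_frac D I"
  shows "finite {T \<in> \<Theta>. \<not> principal T (ideal_prod I T)}"
proof -
  obtain d where d: "d \<in> D" "d \<noteq> 0" "(\<lambda>x. d * x) ` I \<subseteq> D"
    using I unfolding invertible_frac_def frac_ideal_def by blast
  obtain i where i: "i \<in> I" "i \<noteq> 0"
    using invertible_frac_nonzero[OF subring I] by blast
  have "principal T (ideal_prod I T)" if T: "T \<in> \<Theta>" and y: "y \<in> T" "d * i * y = 1" for T y
  proof -
    have "d * u \<in> T" if "u \<in> I" for u
      using that d(3) subset_member[OF T] by auto
    then have "ideal_prod I T = principal_ideal (inverse d) T"
      using ideal_prod_eq_principal_ideal_inverse[OF member_subring[OF T] _ i(1) y] by blast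
    then show ?thesis
      unfolding principal_iff by blast
  qed
  then have "{T \<in> \<Theta>. \<not> principal T (ideal_prod I T)} \<subseteq> {T \<in> \<Theta>. \<not> (\<exists>y\<in>T. d * i * y = 1)}"
    by blast
  moreover have "d * i \<in> D" and "d * i \<noteq> 0"
    using d i by auto
  ultimately show ?thesis
    using locally_finite finite_subset by blast
qed

lemma pic_classes_extended_mem_sum_group:
  assumes I: "invertible_frac D I"
  shows "(\<lambda>T\<in>\<Theta>. pic_class T (ideal_prod I T)) \<in> carrier (sum_group \<Theta> Pic)"
proof -
  have ext: "invertible_frac T (ideal_prod I T)" if "T \<in> \<Theta>" for T
    using invertible_frac_extended_member[OF domain overring I that] .
  have "{T \<in> \<Theta>. pic_class T (ideal_prod I T) \<noteq> princ T} \<subseteq> {T \<in> \<Theta>. \<not> principal T (ideal_prod I T)}"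
    using pic_class_eq_one_iff[OF member_domain ext] ext by (auto simp: princ_def)
  then have "finite {T \<in> \<Theta>. pic_class T (ideal_prod I T) \<noteq> princ T}"
    using finite_nonprincipal_extensions[OF I] by (rule finite_subset)
  moreover have "{T \<in> \<Theta>. (\<lambda>T\<in>\<Theta>. pic_class T (ideal_prod I T)) T \<noteq> princ T}
      = {T \<in> \<Theta>. pic_class T (ideal_prod I T) \<noteq> princ T}"
    by auto
  ultimately show ?thesis
    using ext by (simp add: carrier_sum_group_Pic pic_class_in_carrier)
qed

lemma pic_map_hom: "pic_map D \<Theta> \<in> hom (Pic D) (sum_group \<Theta> Pic)"
proof (rule homI)
  fix c assume "c \<in> carrier (Pic D)"
  then obtain I where "invertible_frac D I" and "c = pic_class D I"
    unfolding carrier_Pic by blast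
  then show "pic_map D \<Theta> c \<in> carrier (sum_group \<Theta> Pic)"
    by (simp add: pic_map_class[OF domain overring] pic_classes_extended_mem_sum_group)
next
  fix c c' assume "c \<in> carrier (Pic D)" and "c' \<in> carrier (Pic D)"
  then obtain I I' where I: "invertible_frac D I" "c = pic_class D I"
    and I': "invertible_frac D I'" "c' = pic_class D I'"
    unfolding carrier_Pic by blast
  have "pic_class T (ideal_prod (ideal_prod I I') T)
      = pic_class T (ideal_prod I T) \<otimes>\<^bsub>Pic T\<^esub> pic_class T (ideal_prod I' T)" if "T \<in> \<Theta>" for T
    using pic_class_mult[OF member_domain[OF that] invertible_frac_extended_member[OF domain overring I(1) that]
        invertible_frac_extended_member[OF domain overring I'(1) that]]
    by (simp add: ideal_prod_extended member_subring[OF that])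
  then show "pic_map D \<Theta> (c \<otimes>\<^bsub>Pic D\<^esub> c') = pic_map D \<Theta> c \<otimes>\<^bsub>sum_group \<Theta> Pic\<^esub> pic_map D \<Theta> c'"
    using I I' by (simp add: pic_class_mult[OF domain] pic_map_class[OF domain overring]
        invertible_frac_ideal_prod[OF subring] cong: restrict_cong)
qed

lemma group_hom_pic_map: "group_hom (Pic D) (sum_group \<Theta> Pic) (pic_map D \<Theta>)"
  by (intro group_hom.intro group_hom_axioms.intro group_Pic domain sum_group group_Pic_member
      pic_map_hom)

lemma pic_map_single:
  assumes T0: "T0 \<in> \<Theta>" and c: "c \<in> carrier (Pic T0)"
  shows "(\<lambda>T\<in>\<Theta>. if T = T0 then c else \<one>\<^bsub>Pic T\<^esub>) \<in> pic_map D \<Theta> ` carrier (Pic D)"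
proof -
  obtain J0 where J0: "invertible_frac T0 J0" and c: "c = pic_class T0 J0"
    using c unfolding carrier_Pic by blast
  obtain J where J: "invertible_frac T0 J" "J \<subseteq> T0" and cJ: "pic_class T0 J = c"
    using pic_class_integral_representative[OF member_domain[OF T0] J0] c by metis
  have "pic_map D \<Theta> (pic_class D (J \<inter> D)) = (\<lambda>T\<in>\<Theta>. pic_class T (ideal_prod (J \<inter> D) T))"
    using domain overring contraction_invertible(1)[OF T0 J] by (rule pic_map_class)
  also have "\<dots> = (\<lambda>T\<in>\<Theta>. if T = T0 then c else \<one>\<^bsub>Pic T\<^esub>)"
    using contraction_invertible(2,3)[OF T0 J] cJ pic_class_subring[OF member_domain]
    by (intro restrict_ext) simp
  finally have "pic_map D \<Theta> (pic_class D (J \<inter> D)) = (\<lambda>T\<in>\<Theta>. if T = T0 then c else \<one>\<^bsub>Pic T\<^esub>)" .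
  then show ?thesis
    using pic_class_in_carrier[OF contraction_invertible(1)[OF T0 J]] by (metis image_eqI)
qed

lemma pic_map_surj: "pic_map D \<Theta> ` carrier (Pic D) = carrier (sum_group \<Theta> Pic)"
proof
  show "pic_map D \<Theta> ` carrier (Pic D) \<subseteq> carrier (sum_group \<Theta> Pic)"
    using pic_map_hom by (auto simp: hom_def)
  show "carrier (sum_group \<Theta> Pic) \<subseteq> pic_map D \<Theta> ` carrier (Pic D)"
    using group_Pic_member group_hom.img_is_subgroup[OF group_hom_pic_map] pic_map_single
    by (rule carrier_sum_group_subset)
qed

end

theorem proposition4p5:
  fixes D :: "'k::field set" and \<Theta> :: "'k set set"
  assumes "domain_with_qf D" and "jaffard D \<Theta>"
  shows "group (Pic D) \<and> (\<forall>T\<in>\<Theta>. group (Pic T))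
    \<and> subgroup (Pic_rel D \<Theta>) (Pic D)
    \<and> pic_map D \<Theta> \<in> hom (Pic D) (sum_group \<Theta> Pic)
    \<and> (\<forall>I. invertible_frac D I \<longrightarrow>
          pic_map D \<Theta> (pic_class D I) = (\<lambda>T\<in>\<Theta>. pic_class T (ideal_prod I T)))
    \<and> kernel (Pic D) (sum_group \<Theta> Pic) (pic_map D \<Theta>) = Pic_rel D \<Theta>
    \<and> pic_map D \<Theta> ` carrier (Pic D) = carrier (sum_group \<Theta> Pic)"
proof -
  interpret jaffard_family D \<Theta>
    using assms by unfold_locales
  have kernel: "kernel (Pic D) (sum_group \<Theta> Pic) (pic_map D \<Theta>) = Pic_rel D \<Theta>"
    using domain overring by (rule kernel_pic_map)
  show ?thesis
    using group_Pic[OF domain] group_Pic_member pic_map_hom pic_map_class[OF domain overring]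
      kernel group_hom.subgroup_kernel[OF group_hom_pic_map] pic_map_surj
    by simp
qed

end
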